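(* For every $\kappa$ with $0<|\kappa|<\delta_1$ there exists $\epsilon_2(\kappa)$, with $\lim_{\kappa\to0}\epsilon_2(\kappa)=0$, such that (i) $\|f'(U_\kappa)-f'(U_g)\|_\infty\le\epsilon_2(\kappa)$; (ii) $(1-\epsilon_2(\kappa))\,dV_g\le dV_{g^\kappa}\le(1+\epsilon_2(\kappa))\,dV_g$ on $I$; (iii) $(1-\epsilon_2(\kappa))|\nabla_g\phi^\kappa|^2\le|\nabla_{g^\kappa}\phi^\kappa|^2\le(1+\epsilon_2(\kappa))|\nabla_g\phi^\kappa|^2$ on $I$.
   Context: Let $l>0$ and $\Psi\in C^3([0,l])$ with $\Psi>0$ on $[0,l]$, $\Psi'(s)=\Psi'''(s)=0$ for $s\in\{0,l\}$, and $\Psi''\Psi-(\Psi')^2[1+(\Psi')^2]>0$ at some $s_0\in(0,l)$. Let $I=[0,l]\times S^1$. $D$ is the surface of revolution parametrized by $(s,\theta)\in I\mapsto(\Psi(s)\cos\theta,\Psi(s)\sin\theta,s)$, with metric $g=\mathrm{diag}(1+\Psi'(s)^2,\Psi(s)^2)$, area element $dV_g=\sqrt{|g|}\,ds\,d\theta$, gradient $\nabla_g$ (so $|\nabla_g u|^2=\frac{(\partial_s u)^2}{1+\Psi'^2}+\frac{(\partial_\theta u)^2}{\Psi^2}$) and Laplace–Beltrami operator $\Delta_g$. For $\kappa\neq0$, $M_\kappa$ is the surface parametrized by $(s,\theta)\in I\mapsto\big(\tfrac1\kappa(1-\cos\kappa s)+\Psi(s)\cos\theta\cos\kappa s,\ \Psi(s)\sin\theta,\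 \tfrac1\kappa\sin\kappa s-\Psi(s)\cos\theta\sin\kappa s\big)$, with metric $g^\kappa=\mathrm{diag}\big(\Psi'(s)^2+(\kappa\Psi(s)\cos\theta-1)^2,\Psi(s)^2\big)$, area element $dV_{g^\kappa}=\sqrt{|g^\kappa|}\,ds\,d\theta$, gradient $\nabla_{g^\kappa}$ (so $|\nabla_{g^\kappa} u|^2=\frac{(\partial_s u)^2}{\Psi'^2+(\kappa\Psi\cos\theta-1)^2}+\frac{(\partial_\theta u)^2}{\Psi^2}$) and Laplace–Beltrami operator $\Delta_{g^\kappa}$; $\delta_0>0$ is such that for $0<|\kappa|\le\delta_0$, $M_\kappa$ is a properly embedded surface with boundary the circles $s=0,s=l$ and outward unit normal $\nu$. Functions on $D$, $M_\kappa$ are identified with functions on $I$. Bandle, Punzo and Tesei constructed $f\in C^1(\mathbb{R})$ and a pattern (stable nonconstant stationary solution) $U_g=U_g(s)$ of the Neumann problem $\partial_t u=\Delta_g u+f(u)$ in $D$, $\partial u/\partial\nu=0$ on $\partial D$, whose linearization has positive principal eigenvalue; $f$, $U_g$ denote these. Fix $0<\alpha<1$; $\delta_1\in(0,\delta_0)$ and, for $0<|\kappa|<\delta_1$, $U_\kappa$ is a stationary solution of the Neumann problem on $M_\kappa$ ($\Delta_{g^\kappa}U_\kappa+f(U_\kappa)=0$ in $M_\kappa$, $\partial U_\kappa/\partial\nu=0$ on $\partial M_\kappa$) with $\|U_\kappa-U_g\|_{C^{2,\alpha}(I)}<\epsilon_1(\kappa)$ where $\epsilon_1(\kappa)\to0$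 as $\kappa\to0$. For such $\kappa$, $\lambda_1^\kappa=\inf_{0\ne q\in H^1(M_\kappa)}\frac{\int_{M_\kappa}(|\nabla_{g^\kappa}q|^2-f'(U_\kappa)q^2)\,dV_{g^\kappa}}{\int_{M_\kappa}q^2\,dV_{g^\kappa}}$ is the principal eigenvalue and $\phi^\kappa\in H^1$ the corresponding eigenfunction: $\Delta_{g^\kappa}\phi^\kappa+f'(U_\kappa)\phi^\kappa=-\lambda_1^\kappa\phi^\kappa$ in $M_\kappa$, $\phi^\kappa>0$, $\|\phi^\kappa\|_{L^2(M_\kappa)}=1$, $\partial\phi^\kappa/\partial\nu=0$ on $\partial M_\kappa$. *)

theory Defs
  imports "HOL-Analysis.Analysis"
begin

text \<open>Functions on I = [0,l] x S^1 are represented as functions real x real => real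
  that are 2 pi-periodic in the second variable theta.\<close>

type_synonym fn2 = "real \<times> real \<Rightarrow> real"
type_synonym metric = "fn2 \<times> fn2"  \<comment> \<open>diagonal metric: (g_ss, g_thth)\<close>

definition Iset :: "real \<Rightarrow> (real \<times> real) set" where
  "Iset l = {0..l} \<times> (UNIV :: real set)"

definition Ibox :: "real \<Rightarrow> (real \<times> real) set" where
  "Ibox l = cbox (0,0) (l, 2*pi)"

definition theta_periodic :: "fn2 \<Rightarrow> bool" where
  "theta_periodic u \<longleftrightarrow> (\<forall>s \<theta>. u (s, \<theta> + 2*pi) = u (s, \<theta>))"

definition d1 :: "real \<Rightarrow> (real \<Rightarrow> real) \<Rightarrow> real \<Rightarrow> real" where
  "d1 l h s = vector_derivative h (at s within {0..l})"

fun Ck_on :: "nat \<Rightarrow> real \<Rightarrow> (real \<Rightarrow> real) \<Rightarrow> bool" where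
  "Ck_on 0 l h = continuous_on {0..l} h"
| "Ck_on (Suc k) l h = ((\<forall>s\<in>{0..l}. h differentiable (at s within {0..l}))
      \<and> continuous_on {0..l} h \<and> Ck_on k l (d1 l h))"

definition ps :: "real \<Rightarrow> fn2 \<Rightarrow> fn2" where
  "ps l u = (\<lambda>(s, \<theta>). vector_derivative (\<lambda>t. u (t, \<theta>)) (at s within {0..l}))"

definition pt :: "fn2 \<Rightarrow> fn2" where
  "pt u = (\<lambda>(s, \<theta>). vector_derivative (\<lambda>t. u (s, t)) (at \<theta>))"

definition C1_I :: "real \<Rightarrow> fn2 \<Rightarrow> bool" where
  "C1_I l u \<longleftrightarrow> theta_periodic u \<and> continuous_on (Iset l) u \<and>
     (\<forall>s\<in>{0..l}. \<forall>\<theta>. (\<lambda>t. u (t, \<theta>)) differentiable (at s within {0..l})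
                     \<and> (\<lambda>t. u (s, t)) differentiable (at \<theta>)) \<and>
     continuous_on (Iset l) (ps l u) \<and> continuous_on (Iset l) (pt u)"

definition C2_I :: "real \<Rightarrow> fn2 \<Rightarrow> bool" where
  "C2_I l u \<longleftrightarrow> C1_I l u \<and> C1_I l (ps l u) \<and> C1_I l (pt u)"

definition supn :: "real \<Rightarrow> fn2 \<Rightarrow> real" where
  "supn l u = Sup ((\<lambda>x. \<bar>u x\<bar>) ` Iset l)"

definition hoelder_quot :: "real \<Rightarrow> real \<Rightarrow> fn2 \<Rightarrow> real set" where
  "hoelder_quot l \<alpha> v = {\<bar>v x - v y\<bar> / (dist x y powr \<alpha>) | x y. x \<in> Iset l \<and> y \<in> Iset l \<and> x \<noteq> y}"

definition second_derivs :: "real \<Rightarrow> fn2 \<Rightarrow> fn2 list" where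
  "second_derivs l u = [ps l (ps l u), pt (ps l u), ps l (pt u), pt (pt u)]"

definition C2a_I :: "real \<Rightarrow> real \<Rightarrow> fn2 \<Rightarrow> bool" where
  "C2a_I l \<alpha> u \<longleftrightarrow> C2_I l u \<and> (\<forall>v\<in>set (second_derivs l u). bdd_above (hoelder_quot l \<alpha> v))"

definition c2a_norm :: "real \<Rightarrow> real \<Rightarrow> fn2 \<Rightarrow> real" where
  "c2a_norm l \<alpha> u =
     sum_list (map (supn l) ([u, ps l u, pt u] @ second_derivs l u))
     + sum_list (map (\<lambda>v. Sup (hoelder_quot l \<alpha> v)) (second_derivs l u))"

definition gD :: "real \<Rightarrow> (real \<Rightarrow> real) \<Rightarrow> metric" where
  "gD l \<Psi> = ((\<lambda>(s, \<theta>). 1 + (d1 l \<Psi> s)\<^sup>2), (\<lambda>(s, \<theta>). (\<Psi> s)\<^sup>2))"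

definition gK :: "real \<Rightarrow> (real \<Rightarrow> real) \<Rightarrow> real \<Rightarrow> metric" where
  "gK l \<Psi> \<kappa> = ((\<lambda>(s, \<theta>). (d1 l \<Psi> s)\<^sup>2 + (\<kappa> * \<Psi> s * cos \<theta> - 1)\<^sup>2), (\<lambda>(s, \<theta>). (\<Psi> s)\<^sup>2))"

definition dens :: "metric \<Rightarrow> fn2" where
  "dens g x = sqrt (fst g x * snd g x)"

text \<open>|grad_g u|^2 in terms of the (classical or weak) partial derivatives us, ut of u.\<close>
definition gradsq :: "metric \<Rightarrow> fn2 \<Rightarrow> fn2 \<Rightarrow> fn2" where
  "gradsq g us ut x = (us x)\<^sup>2 / fst g x + (ut x)\<^sup>2 / snd g x"

definition LB :: "real \<Rightarrow> metric \<Rightarrow> fn2 \<Rightarrow> fn2" where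
  "LB l g u x = (ps l (\<lambda>y. dens g y / fst g y * ps l u y) x
                 + pt (\<lambda>y. dens g y / snd g y * pt u y) x) / dens g x"

text \<open>Outward normal derivative at the boundary circles s = 0 and s = l.\<close>
definition normal_deriv :: "real \<Rightarrow> metric \<Rightarrow> fn2 \<Rightarrow> fn2" where
  "normal_deriv l g u x = (if fst x = 0 then -1 else 1) * ps l u x / sqrt (fst g x)"

definition test_fn :: "real \<Rightarrow> fn2 \<Rightarrow> bool" where
  "test_fn l q \<longleftrightarrow> C1_I l q \<and> (\<exists>a b. 0 < a \<and> b < l \<and> (\<forall>x\<in>Iset l. fst x \<notin> {a..b} \<longrightarrow> q x = 0))"

definition weak_partials :: "real \<Rightarrow> fn2 \<Rightarrow> fn2 \<Rightarrow> fn2 \<Rightarrow> bool" where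
  "weak_partials l u us ut \<longleftrightarrow> (\<forall>q. test_fn l q \<longrightarrow>
     integral (Ibox l) (\<lambda>x. u x * ps l q x) = - integral (Ibox l) (\<lambda>x. us x * q x) \<and>
     integral (Ibox l) (\<lambda>x. u x * pt q x) = - integral (Ibox l) (\<lambda>x. ut x * q x))"

definition H1 :: "real \<Rightarrow> metric \<Rightarrow> fn2 \<Rightarrow> fn2 \<Rightarrow> fn2 \<Rightarrow> bool" where
  "H1 l g u us ut \<longleftrightarrow> theta_periodic u \<and> theta_periodic us \<and> theta_periodic ut \<and>
     u measurable_on Ibox l \<and> us measurable_on Ibox l \<and> ut measurable_on Ibox l \<and>
     (\<lambda>x. (u x)\<^sup>2 * dens g x) integrable_on Ibox l \<and>
     (\<lambda>x. gradsq g us ut x * dens g x) integrable_on Ibox l \<and>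
     weak_partials l u us ut"

definition rayleigh :: "real \<Rightarrow> metric \<Rightarrow> fn2 \<Rightarrow> fn2 \<Rightarrow> fn2 \<Rightarrow> fn2 \<Rightarrow> real" where
  "rayleigh l g V u us ut =
     integral (Ibox l) (\<lambda>x. (gradsq g us ut x - V x * (u x)\<^sup>2) * dens g x)
     / integral (Ibox l) (\<lambda>x. (u x)\<^sup>2 * dens g x)"

text \<open>Principal eigenvalue of  -Delta_g - V  with Neumann conditions.\<close>
definition lam1 :: "real \<Rightarrow> metric \<Rightarrow> fn2 \<Rightarrow> real" where
  "lam1 l g V = Inf {rayleigh l g V u us ut | u us ut.
       H1 l g u us ut \<and> integral (Ibox l) (\<lambda>x. (u x)\<^sup>2 * dens g x) \<noteq> 0}"

definition weak_eigen :: "real \<Rightarrow> metric \<Rightarrow> fn2 \<Rightarrow> real \<Rightarrow> fn2 \<Rightarrow> fn2 \<Rightarrow> fn2 \<Rightarrow> bool" where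
  "weak_eigen l g V lam \<phi> \<phi>s \<phi>t \<longleftrightarrow> H1 l g \<phi> \<phi>s \<phi>t \<and>
     (\<forall>q qs qt. H1 l g q qs qt \<longrightarrow>
        integral (Ibox l) (\<lambda>x. (\<phi>s x * qs x / fst g x + \<phi>t x * qt x / snd g x
                                - V x * \<phi> x * q x) * dens g x)
        = lam * integral (Ibox l) (\<lambda>x. \<phi> x * q x * dens g x))"

definition Xk :: "(real \<Rightarrow> real) \<Rightarrow> real \<Rightarrow> real \<times> real \<Rightarrow> real \<times> real \<times> real" where
  "Xk \<Psi> \<kappa> = (\<lambda>(s, \<theta>). (1/\<kappa> * (1 - cos (\<kappa> * s)) + \<Psi> s * cos \<theta> * cos (\<kappa> * s),
                        \<Psi> s * sin \<theta>,
                        1/\<kappa> * sin (\<kappa> * s) - \<Psi> s * cos \<theta> * sin (\<kappa> * s)))"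

end

theory Submission
  imports Defs
begin

(* The metric g^kappa differs from g only in its ss-entry, and on I
   |(kappa Psi cos theta - 1)^2 - 1| <= |kappa| M (2 + |kappa| M) with M = max Psi, so the area
   densities and the gradient norms agree up to factors 1 +- O(|kappa|) as soon as this defect is
   at most 1/2; for the remaining kappa, positivity of the ss-entry of g^kappa on the compact
   (periodic) set I still gives some finite factor.  The C^{2,alpha} closeness of U_kappa to U_g
   forces uniform convergence, which the continuous f' preserves on bounded sets.  So for each
   estimate every kappa admits some bound and every e > 0 is admissible near kappa = 0; taking
   epsilon_2(kappa) slightly above the least admissible bound gives a function tending to 0. *)

lemma theta_periodic_shift:
  assumes "theta_periodic v"
  shows "v (s, \<theta> + 2*pi * of_int k) = v (s, \<theta>)"
proof (induction k rule: int_induct[where k = 0])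
  case (step1 i)
  have "v (s, \<theta> + 2*pi * of_int (i + 1)) = v (s, (\<theta> + 2*pi * of_int i) + 2*pi)"
    by (simp add: algebra_simps)
  with step1 assms show ?case by (simp add: theta_periodic_def)
next
  case (step2 i)
  have "v (s, \<theta> + 2*pi * of_int i) = v (s, (\<theta> + 2*pi * of_int (i - 1)) + 2*pi)"
    by (simp add: algebra_simps)
  with step2 assms show ?case by (simp add: theta_periodic_def)
qed simp

lemma theta_periodic_image_Iset:
  assumes "theta_periodic v"
  shows "v ` Iset l = v ` ({0..l} \<times> {0..2*pi})"
proof
  show "v ` Iset l \<subseteq> v ` ({0..l} \<times> {0..2*pi})"
  proof (clarsimp simp: Iset_def)
    fix s \<theta> :: real assume s: "0 \<le> s" "s \<le> l"
    define k where "k = \<lfloor>\<theta> / (2*pi)\<rfloor>"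
    have "2*pi * of_int k \<le> \<theta>" "\<theta> < 2*pi * (of_int k + 1)"
      using floor_divide_lower[of "2*pi" \<theta>] floor_divide_upper[of "2*pi" \<theta>]
      by (simp_all add: k_def mult.commute)
    then have "\<theta> - 2*pi * of_int k \<in> {0..2*pi}" by (simp add: algebra_simps)
    moreover have "v (s, \<theta>) = v (s, (\<theta> - 2*pi * of_int k) + 2*pi * of_int k)" by simp
    ultimately show "v (s, \<theta>) \<in> v ` ({0..l} \<times> {0..2*pi})"
      using s theta_periodic_shift[OF assms]
      by (metis (no_types) image_eqI mem_Sigma_iff atLeastAtMost_iff)
  qed
qed (auto simp: Iset_def)

lemma theta_periodic_bounded:
  assumes "continuous_on (Iset l) v" "theta_periodic v"
  obtains B where "\<And>x. x \<in> Iset l \<Longrightarrow> \<bar>v x\<bar> \<le> B"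
proof -
  have "compact (v ` ({0..l} \<times> {0..2*pi}))"
    by (intro compact_continuous_image continuous_on_subset[OF assms(1)] compact_Times compact_Icc)
      (auto simp: Iset_def)
  then obtain B where "\<forall>y \<in> v ` Iset l. norm y \<le> B"
    unfolding theta_periodic_image_Iset[OF assms(2)] by (meson compact_imp_bounded bounded_iff)
  then show ?thesis using that by auto
qed

lemma continuous_on_Iset_fst:
  "continuous_on {0..l} h \<Longrightarrow> continuous_on (Iset l) (\<lambda>x. h (fst x))"
  by (rule continuous_on_compose2[OF _ continuous_on_fst]) (auto simp: Iset_def)

lemma supn_upper:
  assumes "continuous_on (Iset l) v" "theta_periodic v" "x \<in> Iset l"
  shows "\<bar>v x\<bar> \<le> supn l v"
proof -
  obtain B where "\<And>x. x \<in> Iset l \<Longrightarrow> \<bar>v x\<bar> \<le> B"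
    using theta_periodic_bounded[OF assms(1,2)] by blast
  then have "bdd_above ((\<lambda>x. \<bar>v x\<bar>) ` Iset l)" by (rule bdd_aboveI2)
  then show ?thesis unfolding supn_def using assms(3) by (auto intro: cSup_upper)
qed

lemma supn_nonneg:
  assumes "continuous_on (Iset l) v" "theta_periodic v" "0 \<le> l"
  shows "0 \<le> supn l v"
proof -
  have "(0, 0) \<in> Iset l" using assms(3) by (simp add: Iset_def)
  from supn_upper[OF assms(1,2) this] show ?thesis by linarith
qed

lemma theta_periodic_ps: "theta_periodic v \<Longrightarrow> theta_periodic (ps l v)"
  unfolding theta_periodic_def ps_def by simp

lemma theta_periodic_pt:
  assumes "theta_periodic v"
  shows "theta_periodic (pt v)"
  unfolding theta_periodic_def
proof (intro allI)
  fix s \<theta>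
  have shift: "(\<lambda>t. v (s, t + 2*pi)) = (\<lambda>t. v (s, t))"
    using assms by (simp add: theta_periodic_def)
  have "((\<lambda>t. v (s, t)) has_vector_derivative D) (at (\<theta> + 2*pi))
          \<longleftrightarrow> ((\<lambda>t. v (s, t)) has_vector_derivative D) (at \<theta>)" for D
    using DERIV_shift[of "\<lambda>t. v (s, t)" D \<theta> "2*pi"] shift
    by (simp add: has_real_derivative_iff_has_vector_derivative[symmetric])
  then show "pt v (s, \<theta> + 2*pi) = pt v (s, \<theta>)"
    unfolding pt_def vector_derivative_def by simp
qed

lemma hoelder_sup_nonneg:
  assumes "bdd_above (hoelder_quot l \<alpha> v)" "0 < l"
  shows "0 \<le> Sup (hoelder_quot l \<alpha> v)"
proof -
  have "(0, 0) \<in> Iset l" "(0, 1) \<in> Iset l" using assms(2) by (auto simp: Iset_def)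
  then have "\<bar>v (0, 0) - v (0, 1)\<bar> / (dist (0::real, 0::real) (0, 1) powr \<alpha>) \<in> hoelder_quot l \<alpha> v"
    unfolding hoelder_quot_def by fastforce
  from cSup_upper2[OF this _ assms(1)] show ?thesis by simp
qed

lemma abs_le_c2a_norm:
  assumes "C2a_I l \<alpha> u" "0 < l" "x \<in> Iset l"
  shows "\<bar>u x\<bar> \<le> c2a_norm l \<alpha> u"
proof -
  have C1: "C1_I l u" "C1_I l (ps l u)" "C1_I l (pt u)"
    and hoelder: "\<forall>v\<in>set (second_derivs l u). bdd_above (hoelder_quot l \<alpha> v)"
    using assms(1) unfolding C2a_I_def C2_I_def by auto
  have sup_nonneg: "0 \<le> supn l w" if "C1_I l v" "w \<in> {v, ps l v, pt v}" for v w
    using that assms(2) supn_nonneg theta_periodic_ps theta_periodic_pt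
    unfolding C1_I_def by auto
  have "0 \<le> sum_list (map (supn l) (second_derivs l u))"
    using sup_nonneg[OF C1(2)] sup_nonneg[OF C1(3)]
    by (intro sum_list_nonneg) (auto simp: second_derivs_def)
  moreover have "0 \<le> sum_list (map (\<lambda>v. Sup (hoelder_quot l \<alpha> v)) (second_derivs l u))"
    using hoelder hoelder_sup_nonneg assms(2) by (intro sum_list_nonneg) auto
  moreover have "\<bar>u x\<bar> \<le> supn l u" "0 \<le> supn l (ps l u)" "0 \<le> supn l (pt u)"
    using C1 assms sup_nonneg supn_upper unfolding C1_I_def by auto
  ultimately show ?thesis unfolding c2a_norm_def by simp
qed

lemma uniform_limit_if_c2a_close:
  assumes "0 < l"
    and close: "\<forall>\<^sub>F \<kappa> in F. C2a_I l \<alpha> (\<lambda>x. u \<kappa> x - v x) \<and> c2a_norm l \<alpha> (\<lambda>x. u \<kappa> x - v x) < \<epsilon> \<kappa>"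
    and "(\<epsilon> \<longlongrightarrow> 0) F"
  shows "uniform_limit (Iset l) u v F"
proof (rule uniform_limitI)
  fix e :: real assume "0 < e"
  with \<open>(\<epsilon> \<longlongrightarrow> 0) F\<close> have "\<forall>\<^sub>F \<kappa> in F. \<epsilon> \<kappa> < e"
    by (auto dest: order_tendstoD)
  with close show "\<forall>\<^sub>F \<kappa> in F. \<forall>x\<in>Iset l. dist (u \<kappa> x) (v x) < e"
    by eventually_elim (use abs_le_c2a_norm[OF _ \<open>0 < l\<close>] in \<open>fastforce simp: dist_real_def\<close>)
qed

lemma uniform_limit_compose_continuous:
  fixes g :: "real \<Rightarrow> real"
  assumes "continuous_on UNIV g" "uniform_limit S u v F" "\<And>x. x \<in> S \<Longrightarrow> \<bar>v x\<bar> \<le> B"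
  shows "uniform_limit S (\<lambda>\<kappa> x. g (u \<kappa> x)) (\<lambda>x. g (v x)) F"
proof (rule uniform_limit_compose_uniformly_continuous_on[OF assms(2)])
  show "uniformly_continuous_on (cball 0 (B + 1)) g"
    by (intro compact_uniformly_continuous continuous_on_subset[OF assms(1)]) auto
  have "\<forall>\<^sub>F \<kappa> in F. \<forall>x\<in>S. dist (u \<kappa> x) (v x) < 1"
    using uniform_limitD[OF assms(2)] by simp
  then show "\<forall>\<^sub>F \<kappa> in F. \<forall>x\<in>S. u \<kappa> x \<in> cball 0 (B + 1)"
    by eventually_elim (use assms(3) in \<open>fastforce simp: dist_real_def\<close>)
qed simp

lemma obtain_vanishing_bound:
  fixes P :: "real \<Rightarrow> real \<Rightarrow> bool"
  assumes "0 \<notin> K"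
    and mono: "\<And>\<kappa> e e'. P \<kappa> e \<Longrightarrow> e \<le> e' \<Longrightarrow> P \<kappa> e'"
    and bounded: "\<And>\<kappa>. \<kappa> \<in> K \<Longrightarrow> \<exists>e. P \<kappa> e"
    and small: "\<And>e. 0 < e \<Longrightarrow> \<forall>\<^sub>F \<kappa> in at 0. \<kappa> \<in> K \<longrightarrow> P \<kappa> e"
  obtains \<epsilon> where "(\<epsilon> \<longlongrightarrow> 0) (at 0)" "\<And>\<kappa>. \<kappa> \<in> K \<Longrightarrow> P \<kappa> (\<epsilon> \<kappa>)"
proof -
  define A where "A \<kappa> = {e. 0 \<le> e \<and> (\<kappa> \<in> K \<longrightarrow> P \<kappa> e)}" for \<kappa>
  define \<epsilon> where "\<epsilon> \<kappa> = Inf (A \<kappa>) + \<bar>\<kappa>\<bar>" for \<kappa>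
  have A_nonempty: "A \<kappa> \<noteq> {}" for \<kappa>
  proof (cases "\<kappa> \<in> K")
    case True
    with bounded obtain e where "P \<kappa> e" by blast
    then have "P \<kappa> (max e 0)" by (rule mono) simp
    then have "max e 0 \<in> A \<kappa>" by (simp add: A_def)
    then show ?thesis by blast
  qed (auto simp: A_def)
  have A_bdd: "bdd_below (A \<kappa>)" for \<kappa> by (auto simp: A_def)
  (* The margin |kappa| > 0 puts epsilon strictly above Inf (A kappa), so some admissible bound
     lies below it. *)
  have "P \<kappa> (\<epsilon> \<kappa>)" if "\<kappa> \<in> K" for \<kappa>
  proof -
    have "Inf (A \<kappa>) < \<epsilon> \<kappa>" using that \<open>0 \<notin> K\<close> by (cases "\<kappa> = 0") (auto simp: \<epsilon>_def)
    then obtain e where "e \<in> A \<kappa>" "e < \<epsilon> \<kappa>" using cInf_lessD[OF A_nonempty] by blast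
    with that have "P \<kappa> e" "e \<le> \<epsilon> \<kappa>" by (simp_all add: A_def)
    then show ?thesis by (rule mono)
  qed
  moreover have "(\<epsilon> \<longlongrightarrow> 0) (at 0)"
  proof (rule tendstoI)
    fix r :: real assume "0 < r"
    have "((\<lambda>\<kappa>::real. \<bar>\<kappa>\<bar>) \<longlongrightarrow> 0) (at 0)"
      by (intro tendsto_rabs_zero tendsto_ident_at)
    then have "\<forall>\<^sub>F \<kappa> in at 0. \<bar>\<kappa>\<bar> < r/2"
      by (rule order_tendstoD(2)) (use \<open>0 < r\<close> in simp)
    then have "\<forall>\<^sub>F \<kappa> in at 0. (\<kappa> \<in> K \<longrightarrow> P \<kappa> (r/2)) \<and> \<bar>\<kappa>\<bar> < r/2"
      using small[of "r/2"] \<open>0 < r\<close> by (intro eventually_conj) simp_all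
    then show "\<forall>\<^sub>F \<kappa> in at 0. dist (\<epsilon> \<kappa>) 0 < r"
    proof eventually_elim
      case (elim \<kappa>)
      then have "r/2 \<in> A \<kappa>" using \<open>0 < r\<close> by (simp add: A_def)
      then have "Inf (A \<kappa>) \<le> r/2" using A_bdd by (rule cInf_lower)
      moreover have "0 \<le> Inf (A \<kappa>)" using A_nonempty by (rule cInf_greatest) (simp add: A_def)
      ultimately show ?case using elim by (simp add: \<epsilon>_def dist_real_def)
    qed
  qed
  ultimately show ?thesis using that by blast
qed

lemma comp_diff_vanishing:
  fixes g :: "real \<Rightarrow> real" and u :: "real \<Rightarrow> fn2" and v :: fn2
  assumes "continuous_on UNIV g" "uniform_limit (Iset l) u v (at 0)"
    and "continuous_on (Iset l) v" "theta_periodic v"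
    and "\<And>\<kappa>. \<kappa> \<in> K \<Longrightarrow> continuous_on (Iset l) (u \<kappa>) \<and> theta_periodic (u \<kappa>)" "0 \<notin> K"
  obtains \<epsilon> where "(\<epsilon> \<longlongrightarrow> 0) (at 0)"
    "\<And>\<kappa>. \<kappa> \<in> K \<Longrightarrow> \<forall>x\<in>Iset l. \<bar>g (u \<kappa> x) - g (v x)\<bar> \<le> \<epsilon> \<kappa>"
proof -
  let ?P = "\<lambda>\<kappa> e. \<forall>x\<in>Iset l. \<bar>g (u \<kappa> x) - g (v x)\<bar> \<le> e"
  have mono: "?P \<kappa> e'" if "?P \<kappa> e" "e \<le> e'" for \<kappa> e e'
    using that by fastforce
  have bounded: "\<exists>e. ?P \<kappa> e" if "\<kappa> \<in> K" for \<kappa>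
  proof -
    have "continuous_on (Iset l) (\<lambda>x. g (u \<kappa> x) - g (v x))"
      using assms(3) assms(5)[OF that]
      by (intro continuous_intros continuous_on_compose2[OF assms(1) _ subset_UNIV]) auto
    moreover have "theta_periodic (\<lambda>x. g (u \<kappa> x) - g (v x))"
      using assms(4) assms(5)[OF that] by (simp add: theta_periodic_def)
    ultimately obtain B where "\<And>x. x \<in> Iset l \<Longrightarrow> \<bar>g (u \<kappa> x) - g (v x)\<bar> \<le> B"
      using theta_periodic_bounded by blast
    then show ?thesis by blast
  qed
  have small: "\<forall>\<^sub>F \<kappa> in at 0. \<kappa> \<in> K \<longrightarrow> ?P \<kappa> e" if "0 < e" for e
  proof -
    obtain B where "\<And>x. x \<in> Iset l \<Longrightarrow> \<bar>v x\<bar> \<le> B"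
      using theta_periodic_bounded[OF assms(3,4)] by blast
    from uniform_limit_compose_continuous[OF assms(1,2) this]
    have "uniform_limit (Iset l) (\<lambda>\<kappa> x. g (u \<kappa> x)) (\<lambda>x. g (v x)) (at 0)" .
    from uniform_limitD[OF this that] show ?thesis
      by (rule eventually_mono) (auto simp: dist_real_def less_imp_le)
  qed
  show ?thesis
    by (rule obtain_vanishing_bound[where P = ?P, OF assms(6)]) (fact mono bounded small that)+
qed

definition rel_close :: "real \<Rightarrow> 'a set \<Rightarrow> ('a \<Rightarrow> real) \<Rightarrow> ('a \<Rightarrow> real) \<Rightarrow> bool" where
  "rel_close e S v w \<longleftrightarrow> (\<forall>x\<in>S. (1 - e) * v x \<le> w x \<and> w x \<le> (1 + e) * v x)"

lemma rel_close_mono: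
  assumes "rel_close e S v w" "e \<le> e'" "\<And>x. x \<in> S \<Longrightarrow> 0 \<le> v x"
  shows "rel_close e' S v w"
  unfolding rel_close_def
proof
  fix x assume "x \<in> S"
  then have "(1 - e') * v x \<le> (1 - e) * v x" "(1 + e) * v x \<le> (1 + e') * v x"
    using assms(2,3) by (simp_all add: mult_right_mono)
  with \<open>x \<in> S\<close> assms(1) show "(1 - e') * v x \<le> w x \<and> w x \<le> (1 + e') * v x"
    unfolding rel_close_def by fastforce
qed

lemma sqrt_rel_close:
  fixes c d \<eta> :: real
  assumes "0 \<le> c" "0 \<le> d" "\<bar>d - c\<bar> \<le> \<eta> * c"
  shows "(1 - \<eta>) * sqrt c \<le> sqrt d \<and> sqrt d \<le> (1 + \<eta>) * sqrt c"
proof (cases "c = 0")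
  case False
  have "0 \<le> \<eta> * c" using assms(3) by linarith
  with False assms(1) have "0 \<le> \<eta>" by (simp add: zero_le_mult_iff)
  have "d \<le> (1 + \<eta>) * c" using assms(3) by (simp add: algebra_simps)
  also have "\<dots> \<le> (1 + \<eta>)\<^sup>2 * c"
    using assms(1) \<open>0 \<le> \<eta>\<close> by (simp add: power2_eq_square mult_right_mono)
  finally have "sqrt d \<le> sqrt ((1 + \<eta>)\<^sup>2 * c)" by (rule real_sqrt_le_mono)
  then have upper: "sqrt d \<le> (1 + \<eta>) * sqrt c"
    using \<open>0 \<le> \<eta>\<close> by (simp add: real_sqrt_mult)
  have "(1 - \<eta>) * sqrt c \<le> sqrt d"
  proof (cases "\<eta> \<le> 1")
    case True
    have "(1 - \<eta>)\<^sup>2 * c \<le> (1 - \<eta>) * c"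
      using True assms(1) \<open>0 \<le> \<eta>\<close> by (simp add: power2_eq_square mult_right_mono mult_left_le)
    also have "\<dots> \<le> d" using assms(3) by (simp add: algebra_simps)
    finally have "sqrt ((1 - \<eta>)\<^sup>2 * c) \<le> sqrt d" by (rule real_sqrt_le_mono)
    then show ?thesis using True by (simp add: real_sqrt_mult)
  next
    case False
    then have "(1 - \<eta>) * sqrt c \<le> 0" using assms(1) by (simp add: mult_nonpos_nonneg)
    also have "0 \<le> sqrt d" using assms(2) by simp
    finally show ?thesis .
  qed
  with upper show ?thesis by blast
qed (use assms in auto)

lemma dens_rel_close_at:
  fixes g h :: metric
  assumes "snd h x = snd g x" "0 \<le> snd g x" "0 \<le> fst g x" "0 \<le> fst h x"
    and "\<bar>fst h x - fst g x\<bar> \<le> \<eta> * fst g x"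
  shows "(1 - \<eta>) * dens g x \<le> dens h x \<and> dens h x \<le> (1 + \<eta>) * dens g x"
  unfolding dens_def
proof (rule sqrt_rel_close)
  have "\<bar>fst h x * snd h x - fst g x * snd g x\<bar> = \<bar>fst h x - fst g x\<bar> * snd g x"
    using assms(1,2) by (simp add: abs_mult left_diff_distrib[symmetric])
  also have "\<dots> \<le> \<eta> * fst g x * snd g x" using assms(2,5) by (rule mult_right_mono[rotated])
  finally show "\<bar>fst h x * snd h x - fst g x * snd g x\<bar> \<le> \<eta> * (fst g x * snd g x)"
    by (simp add: mult.assoc)
qed (use assms in auto)

lemma gradsq_lower_at:
  fixes g h :: metric
  assumes "snd h x = snd g x" "0 \<le> snd g x" "0 < fst g x" "0 < fst h x" "0 \<le> \<eta>"
    and "fst h x \<le> (1 + \<eta>) * fst g x"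
  shows "(1 - \<eta>) * gradsq g us ut x \<le> gradsq h us ut x"
proof -
  have "(1 - \<eta>) * fst h x \<le> fst g x"
  proof (cases "\<eta> \<le> 1")
    case True
    then have "(1 - \<eta>) * fst h x \<le> (1 - \<eta>) * ((1 + \<eta>) * fst g x)"
      using assms(6) by (simp add: mult_left_mono)
    also have "\<dots> = fst g x - \<eta>\<^sup>2 * fst g x" by (simp add: algebra_simps power2_eq_square)
    also have "\<dots> \<le> fst g x" using assms(3) by simp
    finally show ?thesis .
  next
    case False
    then have "(1 - \<eta>) * fst h x \<le> 0" using assms(4) by (simp add: mult_nonpos_nonneg)
    with assms(3) show ?thesis by linarith
  qed
  with assms(3,4) have "(1 - \<eta>) * ((us x)\<^sup>2 / fst g x) \<le> (us x)\<^sup>2 / fst h x"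
    by (simp add: divide_simps) (metis mult.assoc mult.commute mult_left_mono zero_le_power2)
  moreover have "(1 - \<eta>) * ((ut x)\<^sup>2 / snd g x) \<le> 1 * ((ut x)\<^sup>2 / snd g x)"
    using assms(2,5) by (intro mult_right_mono) simp_all
  ultimately show ?thesis
    unfolding gradsq_def distrib_left using assms(1) by simp
qed

lemma gradsq_upper_at:
  fixes g h :: metric
  assumes "snd h x = snd g x" "0 \<le> snd g x" "0 < fst g x" "0 \<le> e"
    and "fst g x \<le> (1 + e) * fst h x"
  shows "gradsq h us ut x \<le> (1 + e) * gradsq g us ut x"
proof -
  have "0 < (1 + e) * fst h x" using assms(3,5) by linarith
  then have "0 < fst h x" using assms(4) by (simp add: zero_less_mult_iff)
  with assms(3,5) have "(us x)\<^sup>2 / fst h x \<le> (1 + e) * ((us x)\<^sup>2 / fst g x)"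
    by (simp add: divide_simps) (metis mult.assoc mult.commute mult_left_mono zero_le_power2)
  moreover have "1 * ((ut x)\<^sup>2 / snd g x) \<le> (1 + e) * ((ut x)\<^sup>2 / snd g x)"
    using assms(2,4) by (intro mult_right_mono) simp_all
  ultimately show ?thesis
    unfolding gradsq_def distrib_left using assms(1) by simp
qed

lemma rel_close_metrics:
  fixes g h :: metric
  assumes "\<And>x. x \<in> S \<Longrightarrow> snd h x = snd g x \<and> 0 \<le> snd g x \<and> 0 < fst g x
      \<and> \<bar>fst h x - fst g x\<bar> \<le> e * fst g x \<and> fst g x \<le> (1 + e) * fst h x"
  shows "rel_close e S (dens g) (dens h) \<and> rel_close e S (gradsq g us ut) (gradsq h us ut)"
  unfolding rel_close_def
proof (intro conjI ballI)
  fix x assume "x \<in> S"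
  then have snd: "snd h x = snd g x" "0 \<le> snd g x" and pos: "0 < fst g x"
    and close: "\<bar>fst h x - fst g x\<bar> \<le> e * fst g x" and ratio: "fst g x \<le> (1 + e) * fst h x"
    using assms by auto
  have "0 \<le> e * fst g x" using close by linarith
  with pos have "0 \<le> e" by (simp add: zero_le_mult_iff)
  have "0 < (1 + e) * fst h x" using pos ratio by linarith
  with \<open>0 \<le> e\<close> have "0 < fst h x" by (simp add: zero_less_mult_iff)
  have "fst h x \<le> (1 + e) * fst g x"
    using close unfolding abs_le_iff by (simp add: algebra_simps)
  with snd pos \<open>0 < fst h x\<close> \<open>0 \<le> e\<close>
  show "(1 - e) * gradsq g us ut x \<le> gradsq h us ut x" by (rule gradsq_lower_at)
  from snd pos \<open>0 \<le> e\<close> ratio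
  show "gradsq h us ut x \<le> (1 + e) * gradsq g us ut x" by (rule gradsq_upper_at)
  from snd(1,2) less_imp_le[OF pos] less_imp_le[OF \<open>0 < fst h x\<close>] close
  show "(1 - e) * dens g x \<le> dens h x" "dens h x \<le> (1 + e) * dens g x"
    by (blast dest: dens_rel_close_at)+
qed

lemma rel_close_metrics_small:
  fixes g h :: metric
  assumes "\<And>x. x \<in> S \<Longrightarrow> snd h x = snd g x \<and> 0 \<le> snd g x \<and> 0 < fst g x
      \<and> \<bar>fst h x - fst g x\<bar> \<le> \<eta> * fst g x"
    and "\<eta> \<le> 1/2"
  shows "rel_close (2 * \<eta>) S (dens g) (dens h) \<and> rel_close (2 * \<eta>) S (gradsq g us ut) (gradsq h us ut)"
proof (rule rel_close_metrics)
  fix x assume "x \<in> S"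
  then have snd: "snd h x = snd g x" "0 \<le> snd g x" and pos: "0 < fst g x"
    and close: "\<bar>fst h x - fst g x\<bar> \<le> \<eta> * fst g x"
    using assms(1) by auto
  have "0 \<le> \<eta> * fst g x" using close by linarith
  with pos have "0 \<le> \<eta>" by (simp add: zero_le_mult_iff)
  have "\<bar>fst h x - fst g x\<bar> \<le> (2 * \<eta>) * fst g x"
    using close \<open>0 \<le> \<eta> * fst g x\<close> by linarith
  moreover have "fst g x \<le> (1 + 2 * \<eta>) * fst h x"
  proof -
    have "0 \<le> \<eta> * (1 - 2 * \<eta>) * fst g x" using pos \<open>0 \<le> \<eta>\<close> assms(2) by simp
    then have "fst g x \<le> (1 + 2 * \<eta>) * (1 - \<eta>) * fst g x" by (simp add: algebra_simps)
    also have "\<dots> \<le> (1 + 2 * \<eta>) * fst h x"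
      using close \<open>0 \<le> \<eta>\<close> unfolding abs_le_iff mult.assoc
      by (intro mult_left_mono) (simp_all add: algebra_simps)
    finally show ?thesis .
  qed
  ultimately show "snd h x = snd g x \<and> 0 \<le> snd g x \<and> 0 < fst g x
      \<and> \<bar>fst h x - fst g x\<bar> \<le> (2 * \<eta>) * fst g x \<and> fst g x \<le> (1 + 2 * \<eta>) * fst h x"
    using snd pos by blast
qed

lemma fst_gD [simp]: "fst (gD l \<Psi>) x = 1 + (d1 l \<Psi> (fst x))\<^sup>2"
  and snd_gD [simp]: "snd (gD l \<Psi>) x = (\<Psi> (fst x))\<^sup>2"
  by (simp_all add: gD_def split: prod.split)

lemma fst_gK [simp]: "fst (gK l \<Psi> \<kappa>) x = (d1 l \<Psi> (fst x))\<^sup>2 + (\<kappa> * \<Psi> (fst x) * cos (snd x) - 1)\<^sup>2"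
  and snd_gK [simp]: "snd (gK l \<Psi> \<kappa>) x = (\<Psi> (fst x))\<^sup>2"
  by (simp_all add: gK_def split: prod.split)

lemma dens_gD_nonneg [simp]: "0 \<le> dens (gD l \<Psi>) x"
  by (simp add: dens_def)

lemma gradsq_gD_nonneg [simp]: "0 \<le> gradsq (gD l \<Psi>) us ut x"
  by (simp add: gradsq_def add_pos_nonneg)

lemma abs_shifted_square_le:
  fixes z r :: real
  assumes "\<bar>z\<bar> \<le> r"
  shows "\<bar>(z - 1)\<^sup>2 - 1\<bar> \<le> r * (2 + r)"
proof -
  have "\<bar>(z - 1)\<^sup>2 - 1\<bar> = \<bar>z\<bar> * \<bar>z - 2\<bar>"
    by (simp add: power2_eq_square algebra_simps flip: abs_mult)
  also have "\<dots> \<le> r * (2 + r)" using assms by (intro mult_mono) auto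
  finally show ?thesis .
qed

lemma gK_gD_fst_close:
  assumes "\<bar>\<Psi> (fst x)\<bar> \<le> M"
  shows "\<bar>fst (gK l \<Psi> \<kappa>) x - fst (gD l \<Psi>) x\<bar> \<le> \<bar>\<kappa>\<bar> * M * (2 + \<bar>\<kappa>\<bar> * M) * fst (gD l \<Psi>) x"
proof -
  have "\<bar>\<kappa> * \<Psi> (fst x) * cos (snd x)\<bar> \<le> \<bar>\<kappa>\<bar> * M * 1"
    unfolding abs_mult using assms by (intro mult_mono) auto
  then have "\<bar>fst (gK l \<Psi> \<kappa>) x - fst (gD l \<Psi>) x\<bar> \<le> \<bar>\<kappa>\<bar> * M * (2 + \<bar>\<kappa>\<bar> * M)"
    using abs_shifted_square_le by simp
  also have "\<dots> = \<bar>\<kappa>\<bar> * M * (2 + \<bar>\<kappa>\<bar> * M) * 1" by simp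
  also have "\<dots> \<le> \<bar>\<kappa>\<bar> * M * (2 + \<bar>\<kappa>\<bar> * M) * fst (gD l \<Psi>) x"
  proof (rule mult_left_mono)
    have "0 \<le> M" using assms by linarith
    then show "0 \<le> \<bar>\<kappa>\<bar> * M * (2 + \<bar>\<kappa>\<bar> * M)" by simp
  qed simp
  finally show ?thesis .
qed

lemma rel_close_gK_eventually:
  assumes "\<forall>s\<in>{0..l}. \<bar>\<Psi> s\<bar> \<le> M" "0 < e"
  shows "\<forall>\<^sub>F \<kappa> in at 0. rel_close e (Iset l) (dens (gD l \<Psi>)) (dens (gK l \<Psi> \<kappa>))
           \<and> (\<forall>us ut. rel_close e (Iset l) (gradsq (gD l \<Psi>) us ut) (gradsq (gK l \<Psi> \<kappa>) us ut))"
proof -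
  define \<eta> where "\<eta> \<kappa> = \<bar>\<kappa>\<bar> * M * (2 + \<bar>\<kappa>\<bar> * M)" for \<kappa>
  have "(\<eta> \<longlongrightarrow> \<eta> 0) (at 0)" unfolding \<eta>_def by (intro tendsto_intros)
  then have "\<forall>\<^sub>F \<kappa> in at 0. \<eta> \<kappa> < min (e/2) (1/2)"
    by (rule order_tendstoD(2)) (use \<open>0 < e\<close> in \<open>simp add: \<eta>_def\<close>)
  then show ?thesis
  proof eventually_elim
    case (elim \<kappa>)
    have "\<bar>fst (gK l \<Psi> \<kappa>) x - fst (gD l \<Psi>) x\<bar> \<le> \<eta> \<kappa> * fst (gD l \<Psi>) x" if "x \<in> Iset l" for x
      unfolding \<eta>_def using that assms(1) by (intro gK_gD_fst_close) (auto simp: Iset_def)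
    then have close: "rel_close (2 * \<eta> \<kappa>) (Iset l) (dens (gD l \<Psi>)) (dens (gK l \<Psi> \<kappa>))
        \<and> rel_close (2 * \<eta> \<kappa>) (Iset l) (gradsq (gD l \<Psi>) us ut) (gradsq (gK l \<Psi> \<kappa>) us ut)" for us ut
      using elim by (intro rel_close_metrics_small) (auto simp: add_pos_nonneg)
    have "2 * \<eta> \<kappa> \<le> e" using elim by simp
    then show ?case
      using rel_close_mono[OF conjunct1[OF close]] rel_close_mono[OF conjunct2[OF close]] by simp
  qed
qed

lemma rel_close_gK_fixed:
  assumes "continuous_on {0..l} \<Psi>" "continuous_on {0..l} (d1 l \<Psi>)"
    and "\<forall>s\<in>{0..l}. \<bar>\<Psi> s\<bar> \<le> M" "\<forall>x\<in>Iset l. 0 < fst (gK l \<Psi> \<kappa>) x"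
  shows "\<exists>e. rel_close e (Iset l) (dens (gD l \<Psi>)) (dens (gK l \<Psi> \<kappa>))
           \<and> (\<forall>us ut. rel_close e (Iset l) (gradsq (gD l \<Psi>) us ut) (gradsq (gK l \<Psi> \<kappa>) us ut))"
proof -
  have "continuous_on (Iset l) (\<lambda>x. fst (gD l \<Psi>) x / fst (gK l \<Psi> \<kappa>) x)"
    using assms(4) continuous_on_Iset_fst[OF assms(1)] continuous_on_Iset_fst[OF assms(2)]
    by (auto intro!: continuous_intros)
  moreover have "theta_periodic (\<lambda>x. fst (gD l \<Psi>) x / fst (gK l \<Psi> \<kappa>) x)"
    by (simp add: theta_periodic_def)
  ultimately obtain B where B: "\<And>x. x \<in> Iset l \<Longrightarrow> \<bar>fst (gD l \<Psi>) x / fst (gK l \<Psi> \<kappa>) x\<bar> \<le> B"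
    using theta_periodic_bounded by blast
  define \<eta> where "\<eta> = \<bar>\<kappa>\<bar> * M * (2 + \<bar>\<kappa>\<bar> * M)"
  have "rel_close (\<eta> + B) (Iset l) (dens (gD l \<Psi>)) (dens (gK l \<Psi> \<kappa>))
      \<and> rel_close (\<eta> + B) (Iset l) (gradsq (gD l \<Psi>) us ut) (gradsq (gK l \<Psi> \<kappa>) us ut)" for us ut
  proof (rule rel_close_metrics)
    fix x assume x: "x \<in> Iset l"
    have gK_pos: "0 < fst (gK l \<Psi> \<kappa>) x" using x assms(4) by blast
    have "0 \<le> B" using B[OF x] by linarith
    have Psi_le: "\<bar>\<Psi> (fst x)\<bar> \<le> M" using x assms(3) by (auto simp: Iset_def)
    then have "0 \<le> M" by linarith
    then have "0 \<le> \<eta>" by (simp add: \<eta>_def)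
    have close: "\<bar>fst (gK l \<Psi> \<kappa>) x - fst (gD l \<Psi>) x\<bar> \<le> \<eta> * fst (gD l \<Psi>) x"
      unfolding \<eta>_def using Psi_le by (rule gK_gD_fst_close)
    have "\<eta> * fst (gD l \<Psi>) x \<le> (\<eta> + B) * fst (gD l \<Psi>) x"
      using \<open>0 \<le> B\<close> by (intro mult_right_mono) (auto simp: add_pos_nonneg)
    with close have "\<bar>fst (gK l \<Psi> \<kappa>) x - fst (gD l \<Psi>) x\<bar> \<le> (\<eta> + B) * fst (gD l \<Psi>) x"
      by linarith
    moreover have "fst (gD l \<Psi>) x \<le> (1 + (\<eta> + B)) * fst (gK l \<Psi> \<kappa>) x"
    proof -
      have "fst (gD l \<Psi>) x \<le> B * fst (gK l \<Psi> \<kappa>) x"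
        using B[OF x] gK_pos by (simp add: divide_le_eq)
      also have "\<dots> \<le> (1 + (\<eta> + B)) * fst (gK l \<Psi> \<kappa>) x"
        using gK_pos \<open>0 \<le> \<eta>\<close> by (intro mult_right_mono) auto
      finally show ?thesis .
    qed
    ultimately show "snd (gK l \<Psi> \<kappa>) x = snd (gD l \<Psi>) x \<and> 0 \<le> snd (gD l \<Psi>) x
        \<and> 0 < fst (gD l \<Psi>) x \<and> \<bar>fst (gK l \<Psi> \<kappa>) x - fst (gD l \<Psi>) x\<bar> \<le> (\<eta> + B) * fst (gD l \<Psi>) x
        \<and> fst (gD l \<Psi>) x \<le> (1 + (\<eta> + B)) * fst (gK l \<Psi> \<kappa>) x"
      by (simp add: add_pos_nonneg)
  qed
  then show ?thesis by blast
qed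

lemma rel_close_gK_vanishing:
  assumes "continuous_on {0..l} \<Psi>" "continuous_on {0..l} (d1 l \<Psi>)" "0 \<notin> K"
    and "\<And>\<kappa>. \<kappa> \<in> K \<Longrightarrow> \<forall>x\<in>Iset l. 0 < fst (gK l \<Psi> \<kappa>) x"
  obtains \<epsilon> where "(\<epsilon> \<longlongrightarrow> 0) (at 0)"
    "\<And>\<kappa> e. \<kappa> \<in> K \<Longrightarrow> \<epsilon> \<kappa> \<le> e \<Longrightarrow> rel_close e (Iset l) (dens (gD l \<Psi>)) (dens (gK l \<Psi> \<kappa>))
       \<and> (\<forall>us ut. rel_close e (Iset l) (gradsq (gD l \<Psi>) us ut) (gradsq (gK l \<Psi> \<kappa>) us ut))"
proof -
  let ?P = "\<lambda>\<kappa> e. rel_close e (Iset l) (dens (gD l \<Psi>)) (dens (gK l \<Psi> \<kappa>))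
       \<and> (\<forall>us ut. rel_close e (Iset l) (gradsq (gD l \<Psi>) us ut) (gradsq (gK l \<Psi> \<kappa>) us ut))"
  obtain M where M: "\<forall>s\<in>{0..l}. \<bar>\<Psi> s\<bar> \<le> M"
    using compact_imp_bounded[OF compact_continuous_image[OF assms(1) compact_Icc]]
    by (auto simp: bounded_iff)
  have mono: "?P \<kappa> e'" if "?P \<kappa> e" "e \<le> e'" for \<kappa> e e'
    using that rel_close_mono[of e _ "dens (gD l \<Psi>)"] rel_close_mono[of e _ "gradsq (gD l \<Psi>) _ _"]
    by simp
  have bounded: "\<exists>e. ?P \<kappa> e" if "\<kappa> \<in> K" for \<kappa>
    using rel_close_gK_fixed[OF assms(1,2) M assms(4)[OF that]] .
  have small: "\<forall>\<^sub>F \<kappa> in at 0. \<kappa> \<in> K \<longrightarrow> ?P \<kappa> e" if "0 < e" for e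
    using rel_close_gK_eventually[OF M that] by (rule eventually_mono) simp
  have "\<exists>\<epsilon>. (\<epsilon> \<longlongrightarrow> 0) (at 0) \<and> (\<forall>\<kappa>\<in>K. ?P \<kappa> (\<epsilon> \<kappa>))"
    by (rule obtain_vanishing_bound[where P = ?P, OF assms(3)]) (fact mono bounded small | blast)+
  with mono show ?thesis using that by blast
qed

theorem lemma4p3:
  fixes l :: real and \<Psi> :: "real \<Rightarrow> real"
    and f f' :: "real \<Rightarrow> real" and Ug :: "real \<Rightarrow> real"
    and \<alpha> \<delta>0 \<delta>1 :: real and \<epsilon>1 :: "real \<Rightarrow> real"
    and U \<phi> \<phi>s \<phi>t :: "real \<Rightarrow> real \<times> real \<Rightarrow> real"
  assumes l_pos: "l > 0"
    and Psi_C3: "Ck_on 3 l \<Psi>"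
    and Psi_pos: "\<forall>s\<in>{0..l}. \<Psi> s > 0"
    and Psi_bd1: "d1 l \<Psi> 0 = 0" "d1 l \<Psi> l = 0"
    and Psi_bd3: "d1 l (d1 l (d1 l \<Psi>)) 0 = 0" "d1 l (d1 l (d1 l \<Psi>)) l = 0"
    and Psi_s0: "\<exists>s0\<in>{0<..<l}. d1 l (d1 l \<Psi>) s0 * \<Psi> s0
                    - (d1 l \<Psi> s0)\<^sup>2 * (1 + (d1 l \<Psi> s0)\<^sup>2) > 0"
    and delta0: "\<delta>0 > 0"
    and embedded: "\<forall>\<kappa>. 0 < \<bar>\<kappa>\<bar> \<and> \<bar>\<kappa>\<bar> \<le> \<delta>0 \<longrightarrow>
                     inj_on (Xk \<Psi> \<kappa>) ({0..l} \<times> {0..<2*pi}) \<and>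
                     (\<forall>x\<in>Iset l. fst (gK l \<Psi> \<kappa>) x > 0)"
    and f_C1: "\<forall>x. (f has_real_derivative f' x) (at x)" "continuous_on UNIV f'"
    and Ug_C2: "C2_I l (\<lambda>x. Ug (fst x))"
    and Ug_eq: "\<forall>x\<in>Iset l. LB l (gD l \<Psi>) (\<lambda>y. Ug (fst y)) x + f (Ug (fst x)) = 0"
    and Ug_neu: "\<forall>\<theta>. normal_deriv l (gD l \<Psi>) (\<lambda>y. Ug (fst y)) (0, \<theta>) = 0
                    \<and> normal_deriv l (gD l \<Psi>) (\<lambda>y. Ug (fst y)) (l, \<theta>) = 0"
    and Ug_nonconst: "\<exists>s\<in>{0..l}. \<exists>t\<in>{0..l}. Ug s \<noteq> Ug t"
    and Ug_stable: "lam1 l (gD l \<Psi>) (\<lambda>x. f' (Ug (fst x))) > 0"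
    and alpha: "0 < \<alpha>" "\<alpha> < 1"
    and delta1: "0 < \<delta>1" "\<delta>1 < \<delta>0"
    and eps1_lim: "(\<epsilon>1 \<longlongrightarrow> 0) (at 0)"
    and U_C2: "\<forall>\<kappa>. 0 < \<bar>\<kappa>\<bar> \<and> \<bar>\<kappa>\<bar> < \<delta>1 \<longrightarrow> C2_I l (U \<kappa>)"
    and U_eq: "\<forall>\<kappa>. 0 < \<bar>\<kappa>\<bar> \<and> \<bar>\<kappa>\<bar> < \<delta>1 \<longrightarrow>
                 (\<forall>x\<in>Iset l. LB l (gK l \<Psi> \<kappa>) (U \<kappa>) x + f (U \<kappa> x) = 0)"
    and U_neu: "\<forall>\<kappa>. 0 < \<bar>\<kappa>\<bar> \<and> \<bar>\<kappa>\<bar> < \<delta>1 \<longrightarrow>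
                 (\<forall>\<theta>. normal_deriv l (gK l \<Psi> \<kappa>) (U \<kappa>) (0, \<theta>) = 0
                     \<and> normal_deriv l (gK l \<Psi> \<kappa>) (U \<kappa>) (l, \<theta>) = 0)"
    and U_close: "\<forall>\<kappa>. 0 < \<bar>\<kappa>\<bar> \<and> \<bar>\<kappa>\<bar> < \<delta>1 \<longrightarrow>
                 C2a_I l \<alpha> (\<lambda>x. U \<kappa> x - Ug (fst x)) \<and>
                 c2a_norm l \<alpha> (\<lambda>x. U \<kappa> x - Ug (fst x)) < \<epsilon>1 \<kappa>"
    and phi_eigen: "\<forall>\<kappa>. 0 < \<bar>\<kappa>\<bar> \<and> \<bar>\<kappa>\<bar> < \<delta>1 \<longrightarrow>
                 weak_eigen l (gK l \<Psi> \<kappa>) (\<lambda>x. f' (U \<kappa> x))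
                    (lam1 l (gK l \<Psi> \<kappa>) (\<lambda>x. f' (U \<kappa> x))) (\<phi> \<kappa>) (\<phi>s \<kappa>) (\<phi>t \<kappa>)"
    and phi_pos: "\<forall>\<kappa>. 0 < \<bar>\<kappa>\<bar> \<and> \<bar>\<kappa>\<bar> < \<delta>1 \<longrightarrow> (\<forall>x\<in>Iset l. \<phi> \<kappa> x > 0)"
    and phi_norm: "\<forall>\<kappa>. 0 < \<bar>\<kappa>\<bar> \<and> \<bar>\<kappa>\<bar> < \<delta>1 \<longrightarrow>
                 integral (Ibox l) (\<lambda>x. (\<phi> \<kappa> x)\<^sup>2 * dens (gK l \<Psi> \<kappa>) x) = 1"
  shows "\<exists>\<epsilon>2 :: real \<Rightarrow> real. (\<epsilon>2 \<longlongrightarrow> 0) (at 0) \<and>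
     (\<forall>\<kappa>. 0 < \<bar>\<kappa>\<bar> \<and> \<bar>\<kappa>\<bar> < \<delta>1 \<longrightarrow>
        (\<forall>x\<in>Iset l. \<bar>f' (U \<kappa> x) - f' (Ug (fst x))\<bar> \<le> \<epsilon>2 \<kappa>) \<and>
        (\<forall>x\<in>Iset l. (1 - \<epsilon>2 \<kappa>) * dens (gD l \<Psi>) x \<le> dens (gK l \<Psi> \<kappa>) x \<and>
                    dens (gK l \<Psi> \<kappa>) x \<le> (1 + \<epsilon>2 \<kappa>) * dens (gD l \<Psi>) x) \<and>
        (\<forall>x\<in>Iset l.
           (1 - \<epsilon>2 \<kappa>) * gradsq (gD l \<Psi>) (\<phi>s \<kappa>) (\<phi>t \<kappa>) x
              \<le> gradsq (gK l \<Psi> \<kappa>) (\<phi>s \<kappa>) (\<phi>t \<kappa>) x \<and>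
           gradsq (gK l \<Psi> \<kappa>) (\<phi>s \<kappa>) (\<phi>t \<kappa>) x
              \<le> (1 + \<epsilon>2 \<kappa>) * gradsq (gD l \<Psi>) (\<phi>s \<kappa>) (\<phi>t \<kappa>) x))"
proof -
  define K where "K = {\<kappa>::real. 0 < \<bar>\<kappa>\<bar> \<and> \<bar>\<kappa>\<bar> < \<delta>1}"
  have "0 \<notin> K" by (simp add: K_def)
  have "\<forall>\<^sub>F \<kappa> in at 0. \<kappa> \<in> K"
    using delta1(1) by (auto simp: K_def eventually_at dist_real_def intro!: exI[of _ \<delta>1])
  then have lim: "uniform_limit (Iset l) U (\<lambda>x. Ug (fst x)) (at 0)"
    using U_close by (intro uniform_limit_if_c2a_close[OF l_pos _ eps1_lim])
      (auto elim!: eventually_mono simp: K_def)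
  have Ug_cont: "continuous_on (Iset l) (\<lambda>x. Ug (fst x))"
    using Ug_C2 by (simp add: C2_I_def C1_I_def)
  have Ug_per: "theta_periodic (\<lambda>x. Ug (fst x))" by (simp add: theta_periodic_def)
  have U_reg: "continuous_on (Iset l) (U \<kappa>) \<and> theta_periodic (U \<kappa>)" if "\<kappa> \<in> K" for \<kappa>
    using U_C2 that by (simp add: K_def C2_I_def C1_I_def)
  obtain \<epsilon>f where \<epsilon>f: "(\<epsilon>f \<longlongrightarrow> 0) (at 0)"
    "\<And>\<kappa>. \<kappa> \<in> K \<Longrightarrow> \<forall>x\<in>Iset l. \<bar>f' (U \<kappa> x) - f' (Ug (fst x))\<bar> \<le> \<epsilon>f \<kappa>"
    using comp_diff_vanishing[OF f_C1(2) lim Ug_cont Ug_per U_reg \<open>0 \<notin> K\<close>] by blast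
  have "continuous_on {0..l} \<Psi>" "continuous_on {0..l} (d1 l \<Psi>)"
    using Psi_C3 by (simp_all add: numeral_3_eq_3)
  moreover have "\<forall>x\<in>Iset l. 0 < fst (gK l \<Psi> \<kappa>) x" if "\<kappa> \<in> K" for \<kappa>
    using embedded delta1 that by (auto simp: K_def simp del: fst_gK)
  ultimately obtain \<epsilon>m where \<epsilon>m: "(\<epsilon>m \<longlongrightarrow> 0) (at 0)"
    "\<And>\<kappa> e. \<kappa> \<in> K \<Longrightarrow> \<epsilon>m \<kappa> \<le> e \<Longrightarrow> rel_close e (Iset l) (dens (gD l \<Psi>)) (dens (gK l \<Psi> \<kappa>))
       \<and> (\<forall>us ut. rel_close e (Iset l) (gradsq (gD l \<Psi>) us ut) (gradsq (gK l \<Psi> \<kappa>) us ut))"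
    using rel_close_gK_vanishing \<open>0 \<notin> K\<close> by blast
  define \<epsilon>2 where "\<epsilon>2 \<kappa> = max (\<epsilon>f \<kappa>) (\<epsilon>m \<kappa>)" for \<kappa>
  have "(\<epsilon>2 \<longlongrightarrow> 0) (at 0)"
    unfolding \<epsilon>2_def using tendsto_max[OF \<epsilon>f(1) \<epsilon>m(1)] by simp
  moreover have "(\<forall>x\<in>Iset l. \<bar>f' (U \<kappa> x) - f' (Ug (fst x))\<bar> \<le> \<epsilon>2 \<kappa>)
      \<and> rel_close (\<epsilon>2 \<kappa>) (Iset l) (dens (gD l \<Psi>)) (dens (gK l \<Psi> \<kappa>))
      \<and> rel_close (\<epsilon>2 \<kappa>) (Iset l) (gradsq (gD l \<Psi>) (\<phi>s \<kappa>) (\<phi>t \<kappa>))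
          (gradsq (gK l \<Psi> \<kappa>) (\<phi>s \<kappa>) (\<phi>t \<kappa>))" if "\<kappa> \<in> K" for \<kappa>
    using \<epsilon>f(2)[OF that] \<epsilon>m(2)[OF that] unfolding \<epsilon>2_def
    by (fastforce intro: order_trans[OF _ max.cobounded1])
  ultimately show ?thesis unfolding K_def rel_close_def by blast
qed

end
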